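(* Consider $\min_{x\in\mathbb{R}^n}\max_{y\in\mathbb{R}^m}f(x,y)$ with $f$ twice differentiable at $(\bar x,\bar y)$. (a) If $\nabla_xf(\bar x,\bar y)=0$, $\nabla_yf(\bar x,\bar y)=0$, $\nabla^2_{yy}f(\bar x,\bar y)\prec0$ and $$\big[\nabla^2_{xx}f-\nabla^2_{xy}f\,(\nabla^2_{yy}f)^{-1}\nabla^2_{yx}f\big](\bar x,\bar y)\succ0,$$ then $(\bar x,\bar y)$ is a calm local minimax point (and hence a local minimax point). (b) If $(\bar x,\bar y)$ is a local minimax point and $\nabla^2_{yy}f(\bar x,\bar y)\prec0$, then $\big[\nabla^2_{xx}f-\nabla^2_{xy}f\,(\nabla^2_{yy}f)^{-1}\nabla^2_{yx}f\big](\bar x,\bar y)\succeq0$.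
   Context: $f:\mathbb{R}^n\times\mathbb{R}^m\to\mathbb{R}$. Standing assumption: for every $x$, $\bar y$ and $\epsilon\ge0$ the maximum of $f(x,\cdot)$ over $\mathbb{B}_\epsilon(\bar y)$ is attained, $\mathbb{B}_\epsilon(z)$ the closed Euclidean ball. A radius function is $\tau:[0,\infty)\to[0,\infty)$ with $\tau(0)=0$, $\tau(\delta)\to0$ as $\delta\downarrow0$; calm at $0$ if $\tau(\delta)\le\kappa\delta$ on $[0,\delta_1]$ for some $\kappa,\delta_1>0$. $(\bar x,\bar y)$ is a local minimax point if there exist $\delta_0>0$ and a radius function $\tau$ with $f(\bar x,y)\le f(\bar x,\bar y)\le\max_{y'\in\mathbb{B}_{\tau(\delta)}(\bar y)}f(x,y')$ for all $\delta\in(0,\delta_0]$, $x\in\mathbb{B}_\delta(\bar x)$, $y\in\mathbb{B}_\delta(\bar y)$; a calm local minimax point if this holds with $\tau$ calm at $0$. $\nabla^2_{xy}f$ is the $n\times m$ block of mixed second derivatives and $\nabla^2_{yx}f=(\nabla^2_{xy}f)^T$; $\succ0$, $\succeq0$, $\prec0$ denote positive definite, positive semidefinite, negative definite. *)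

theory Defs
  imports "HOL-Analysis.Analysis"
begin

definition radius_function :: "(real \<Rightarrow> real) \<Rightarrow> bool" where
  "radius_function \<tau> \<longleftrightarrow> \<tau> 0 = 0 \<and> (\<forall>\<delta>\<ge>0. \<tau> \<delta> \<ge> 0) \<and> (\<tau> \<longlongrightarrow> 0) (at_right 0)"

definition calm_at_0 :: "(real \<Rightarrow> real) \<Rightarrow> bool" where
  "calm_at_0 \<tau> \<longleftrightarrow> (\<exists>\<kappa>>0. \<exists>\<delta>1>0. \<forall>\<delta>\<in>{0..\<delta>1}. \<tau> \<delta> \<le> \<kappa> * \<delta>)"

text \<open>Under the standing
  assumption that maxima over closed balls are attained, the inequality
  f(xb,yb) <= max over the ball is written as existence of a point of the ball.\<close>
definition minimax_with :: "('x::metric_space \<Rightarrow> 'y::metric_space \<Rightarrow> real) \<Rightarrow> 'x \<Rightarrow> 'y \<Rightarrow> real \<Rightarrow> (real \<Rightarrow> real) \<Rightarrow> bool" where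
  "minimax_with f xb yb \<delta>0 \<tau> \<longleftrightarrow>
     (\<forall>\<delta>\<in>{0<..\<delta>0}. \<forall>x\<in>cball xb \<delta>. \<forall>y\<in>cball yb \<delta>.
        f xb y \<le> f xb yb \<and> (\<exists>y'\<in>cball yb (\<tau> \<delta>). f xb yb \<le> f x y'))"

definition local_minimax :: "('x::metric_space \<Rightarrow> 'y::metric_space \<Rightarrow> real) \<Rightarrow> 'x \<Rightarrow> 'y \<Rightarrow> bool" where
  "local_minimax f xb yb \<longleftrightarrow> (\<exists>\<delta>0>0. \<exists>\<tau>. radius_function \<tau> \<and> minimax_with f xb yb \<delta>0 \<tau>)"

definition calm_local_minimax :: "('x::metric_space \<Rightarrow> 'y::metric_space \<Rightarrow> real) \<Rightarrow> 'x \<Rightarrow> 'y \<Rightarrow> bool" where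
  "calm_local_minimax f xb yb \<longleftrightarrow>
     (\<exists>\<delta>0>0. \<exists>\<tau>. radius_function \<tau> \<and> calm_at_0 \<tau> \<and> minimax_with f xb yb \<delta>0 \<tau>)"

definition has_second_derivative_at ::
  "('a::real_normed_vector \<Rightarrow> real) \<Rightarrow> ('a \<Rightarrow> 'a \<Rightarrow>\<^sub>L real) \<Rightarrow> ('a \<Rightarrow>\<^sub>L ('a \<Rightarrow>\<^sub>L real)) \<Rightarrow> 'a \<Rightarrow> bool" where
  "has_second_derivative_at g Dg D2 p \<longleftrightarrow>
     (\<forall>\<^sub>F q in nhds p. (g has_derivative blinfun_apply (Dg q)) (at q)) \<and>
     (Dg has_derivative blinfun_apply D2) (at p)"

definition hess_xx :: "(((real^'n) \<times> (real^'m)) \<Rightarrow>\<^sub>L (((real^'n) \<times> (real^'m)) \<Rightarrow>\<^sub>L real)) \<Rightarrow> real^'n^'n" where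
  "hess_xx D2 = (\<chi> i j. blinfun_apply (blinfun_apply D2 (axis i 1, 0)) (axis j 1, 0))"

definition hess_xy :: "(((real^'n) \<times> (real^'m)) \<Rightarrow>\<^sub>L (((real^'n) \<times> (real^'m)) \<Rightarrow>\<^sub>L real)) \<Rightarrow> real^'m^'n" where
  "hess_xy D2 = (\<chi> i j. blinfun_apply (blinfun_apply D2 (axis i 1, 0)) (0, axis j 1))"

definition hess_yy :: "(((real^'n) \<times> (real^'m)) \<Rightarrow>\<^sub>L (((real^'n) \<times> (real^'m)) \<Rightarrow>\<^sub>L real)) \<Rightarrow> real^'m^'m" where
  "hess_yy D2 = (\<chi> i j. blinfun_apply (blinfun_apply D2 (0, axis i 1)) (0, axis j 1))"

text \<open>Schur complement  Hxx - Hxy Hyy^{-1} Hyx  with Hyx = Hxy^T.\<close>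
definition schur_hess :: "(((real^'n) \<times> (real^'m)) \<Rightarrow>\<^sub>L (((real^'n) \<times> (real^'m)) \<Rightarrow>\<^sub>L real)) \<Rightarrow> real^'n^'n" where
  "schur_hess D2 = hess_xx D2 - hess_xy D2 ** matrix_inv (hess_yy D2) ** transpose (hess_xy D2)"

definition pos_def :: "real^'k^'k \<Rightarrow> bool" where
  "pos_def A \<longleftrightarrow> (\<forall>v. v \<noteq> 0 \<longrightarrow> v \<bullet> (A *v v) > 0)"

definition pos_semidef :: "real^'k^'k \<Rightarrow> bool" where
  "pos_semidef A \<longleftrightarrow> (\<forall>v. v \<bullet> (A *v v) \<ge> 0)"

definition neg_def :: "real^'k^'k \<Rightarrow> bool" where
  "neg_def A \<longleftrightarrow> (\<forall>v. v \<noteq> 0 \<longrightarrow> v \<bullet> (A *v v) < 0)"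

end

theory Submission
  imports Defs
begin

text \<open>Expand \<open>f\<close> to second order at \<open>(xb, yb)\<close> and complete the square in \<open>v\<close>: with
  \<open>H = \<nabla>\<^sup>2\<^sub>y\<^sub>y f\<close> and the Schur complement \<open>S\<close>, the quadratic term is
  \<open>u \<bullet> S u + (v - r u) \<bullet> H (v - r u)\<close>, where \<open>r u = - H\<^sup>-\<^sup>1 \<nabla>\<^sup>2\<^sub>y\<^sub>x f u\<close> maximises the model in \<open>v\<close>.

  (a) At a critical point, \<open>H \<prec> 0\<close> makes \<open>yb\<close> a local maximiser of \<open>f xb\<close>, and \<open>S \<succ> 0\<close>
  gives \<open>f (xb + u) (yb + r u) \<ge> f xb yb\<close>; since \<open>|r u| \<le> K |u|\<close>, the radius \<open>\<tau> \<delta> = K \<delta>\<close> works.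

  (b) For \<open>x = xb + t u\<close> the minimax property provides \<open>y\<close> close to \<open>yb\<close> with
  \<open>f x y \<ge> f xb yb\<close>, while maximising the model over \<open>v\<close> bounds \<open>f x y - f xb yb\<close> by
  \<open>t \<nabla>\<^sub>xf u + t\<^sup>2 (u \<bullet> S u / 2 + o(1))\<close>. Letting \<open>t \<rightarrow> 0\<close> forces \<open>\<nabla>\<^sub>xf = 0\<close> and then
  \<open>u \<bullet> S u \<ge> 0\<close>.\<close>

section \<open>Second derivatives\<close>

lemma has_derivative_at_shift:
  fixes g :: "'a::real_normed_vector \<Rightarrow> 'b::real_normed_vector"
  assumes "(g has_derivative g') (at (p + x))"
  shows "((\<lambda>x. g (p + x)) has_derivative g') (at x)"
  using diff_chain_at[OF shift_has_derivative_id assms] by (simp add: o_def)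

lemma has_second_derivative_at_local_estimate:
  fixes g :: "'a::real_normed_vector \<Rightarrow> real"
  assumes sd: "has_second_derivative_at g Dg D2 p" and "e > 0"
  obtains d where "d > 0"
    "\<And>x. norm x < d \<Longrightarrow> ((\<lambda>x. g (p + x)) has_derivative blinfun_apply (Dg (p + x))) (at x)"
    "\<And>x. norm x < d \<Longrightarrow> norm (Dg (p + x) - Dg p - blinfun_apply D2 x) \<le> e * norm x"
proof -
  obtain r where "r > 0" and r: "\<And>q. dist q p < r \<Longrightarrow> (g has_derivative blinfun_apply (Dg q)) (at q)"
    using sd unfolding has_second_derivative_at_def eventually_nhds_metric by blast
  obtain d where "d > 0" and
    d: "\<And>q. norm (q - p) < d \<Longrightarrow> norm (Dg q - Dg p - blinfun_apply D2 (q - p)) \<le> e * norm (q - p)"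
    using sd \<open>e > 0\<close> unfolding has_second_derivative_at_def has_derivative_at_alt by blast
  show thesis
    by (rule that[of "min r d"]) (use \<open>r > 0\<close> \<open>d > 0\<close> d[of "p + _"] in
        \<open>auto intro!: has_derivative_at_shift r simp: dist_norm\<close>)
qed

lemma second_difference_estimate:
  fixes g :: "'a::real_normed_vector \<Rightarrow> real"
  assumes sd: "has_second_derivative_at g Dg D2 p" and e: "e > 0"
  shows "\<exists>r>0. \<forall>h k. norm h \<le> r \<longrightarrow> norm k \<le> r \<longrightarrow>
     \<bar>g (p + h + k) - g (p + h) - g (p + k) + g p - blinfun_apply (blinfun_apply D2 k) h\<bar> \<le> 3 * e * r * norm h"
proof -
  obtain d where "d > 0"
    and g': "\<And>x. norm x < d \<Longrightarrow> ((\<lambda>x. g (p + x)) has_derivative blinfun_apply (Dg (p + x))) (at x)"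
    and Dg: "\<And>x. norm x < d \<Longrightarrow> norm (Dg (p + x) - Dg p - blinfun_apply D2 x) \<le> e * norm x"
    using has_second_derivative_at_local_estimate[OF sd e] by blast
  define r where "r = d / 3"
  have r: "r > 0" using \<open>d > 0\<close> by (simp add: r_def)
  show ?thesis
  proof (intro exI[of _ r] conjI allI impI r)
    fix h k :: 'a assume h: "norm h \<le> r" and k: "norm k \<le> r"
    define F where "F x = g (p + (k + x)) - g (p + x) - blinfun_apply (blinfun_apply D2 k) x" for x
    define F' where "F' x = Dg (p + (k + x)) - Dg (p + x) - blinfun_apply D2 k" for x
    have near: "norm (k + x) < d" "norm x < d" if "norm x \<le> r" for x
      using norm_triangle_ineq[of k x] that k r unfolding r_def by auto
    have der: "(F has_derivative blinfun_apply (F' x)) (at x within cball 0 r)" if "x \<in> cball 0 r" for x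
    proof -
      have "((\<lambda>x. g (p + (k + x))) has_derivative blinfun_apply (Dg (p + (k + x)))) (at x)"
        using near(1) that by (intro has_derivative_at_shift[where g="\<lambda>y. g (p + y)"] g') simp
      with g'[OF near(2)] have "(F has_derivative (\<lambda>y. blinfun_apply (Dg (p + (k + x))) y
          - blinfun_apply (Dg (p + x)) y - blinfun_apply (blinfun_apply D2 k) y)) (at x)"
        using that unfolding F_def
        by (intro derivative_intros bounded_linear_imp_has_derivative blinfun.bounded_linear_right) auto
      moreover have "blinfun_apply (F' x) = (\<lambda>y. blinfun_apply (Dg (p + (k + x))) y
          - blinfun_apply (Dg (p + x)) y - blinfun_apply (blinfun_apply D2 k) y)"
        by (simp add: F'_def blinfun.diff_left fun_eq_iff)
      ultimately show ?thesis by (simp add: has_derivative_at_withinI)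
    qed
    have bnd: "onorm (blinfun_apply (F' x)) \<le> 3 * e * r" if "x \<in> cball 0 r" for x
    proof -
      have nx: "norm x \<le> r" using that by simp
      have "F' x = (Dg (p + (k + x)) - Dg p - blinfun_apply D2 (k + x)) - (Dg (p + x) - Dg p - blinfun_apply D2 x)"
        by (simp add: F'_def blinfun.add_right algebra_simps)
      hence "norm (F' x) \<le> e * norm (k + x) + e * norm x"
        using Dg[OF near(1)[OF nx]] Dg[OF near(2)[OF nx]] norm_triangle_ineq4 by smt
      also have "\<dots> \<le> e * (3 * r)"
        using norm_triangle_ineq[of k x] nx k e by (simp add: ring_distribs[symmetric])
      finally show ?thesis by (simp add: norm_blinfun.rep_eq)
    qed
    have "norm (F h - F 0) \<le> 3 * e * r * norm (h - 0)"
      by (rule differentiable_bound[OF convex_cball der bnd]) (use h r in auto)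
    thus "\<bar>g (p + h + k) - g (p + h) - g (p + k) + g p - blinfun_apply (blinfun_apply D2 k) h\<bar> \<le> 3 * e * r * norm h"
      unfolding F_def by (simp add: algebra_simps)
  qed
qed

lemma has_second_derivative_at_symmetric:
  fixes g :: "'a::real_normed_vector \<Rightarrow> real"
  assumes sd: "has_second_derivative_at g Dg D2 p"
  shows "blinfun_apply (blinfun_apply D2 a) b = blinfun_apply (blinfun_apply D2 b) a"
proof -
  define s where "s = norm a + norm b + 1"
  have s: "s > 0" "norm a \<le> s" "norm b \<le> s"
    unfolding s_def using norm_ge_zero[of a] norm_ge_zero[of b] by linarith+
  define X where "X = \<bar>blinfun_apply (blinfun_apply D2 a) b - blinfun_apply (blinfun_apply D2 b) a\<bar>"
  have main: "X \<le> 6 * e * s^2" if e: "e > 0" for e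
  proof -
    obtain r where r: "r > 0" and R: "\<And>h k. norm h \<le> r \<Longrightarrow> norm k \<le> r \<Longrightarrow>
        \<bar>g (p + h + k) - g (p + h) - g (p + k) + g p - blinfun_apply (blinfun_apply D2 k) h\<bar> \<le> 3 * e * r * norm h"
      using second_difference_estimate[OF sd e] by blast
    define c where "c = r / s"
    have c: "c > 0" using r s by (simp add: c_def)
    have nh: "norm (c *\<^sub>R a) \<le> r" "norm (c *\<^sub>R b) \<le> r"
      using s r c by (auto simp: c_def field_simps intro: mult_left_mono)
    have "3 * e * r * norm (c *\<^sub>R a) \<le> 3 * e * r * r" "3 * e * r * norm (c *\<^sub>R b) \<le> 3 * e * r * r"
      using nh e r by (auto intro!: mult_left_mono)
    \<comment> \<open>The second difference is symmetric in the two increments, while its approximation is not.\<close>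
    moreover have "p + c *\<^sub>R b + c *\<^sub>R a = p + c *\<^sub>R a + c *\<^sub>R b" by (simp add: algebra_simps)
    note R[OF nh(1) nh(2)] R[OF nh(2) nh(1), unfolded this]
    moreover have "c^2 * X = \<bar>blinfun_apply (blinfun_apply D2 (c *\<^sub>R a)) (c *\<^sub>R b)
        - blinfun_apply (blinfun_apply D2 (c *\<^sub>R b)) (c *\<^sub>R a)\<bar>"
      unfolding X_def using c
      by (simp add: blinfun.scaleR_left blinfun.scaleR_right power2_eq_square abs_mult
          right_diff_distrib[symmetric] mult.assoc)
    ultimately have "c^2 * X \<le> 6 * e * r * r" by linarith
    hence "r^2 * X \<le> r^2 * (6 * e * s^2)" using s
      by (simp add: c_def power_divide field_simps power2_eq_square)
    thus ?thesis using r by simp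
  qed
  have "X \<le> 0 + e" if "e > 0" for e
    using main[of "e / (6 * s^2)"] that s by simp
  hence "X \<le> 0" by (rule field_le_epsilon)
  thus ?thesis unfolding X_def by simp
qed

lemma has_second_derivative_at_taylor:
  fixes g :: "'a::real_normed_vector \<Rightarrow> real"
  assumes sd: "has_second_derivative_at g Dg D2 p" and e: "e > 0"
  shows "\<exists>d>0. \<forall>h. norm h < d \<longrightarrow>
     \<bar>g (p + h) - g p - blinfun_apply (Dg p) h - blinfun_apply (blinfun_apply D2 h) h / 2\<bar> \<le> e * (norm h)^2"
proof -
  obtain d where "d > 0"
    and g': "\<And>x. norm x < d \<Longrightarrow> ((\<lambda>x. g (p + x)) has_derivative blinfun_apply (Dg (p + x))) (at x)"
    and Dg: "\<And>x. norm x < d \<Longrightarrow> norm (Dg (p + x) - Dg p - blinfun_apply D2 x) \<le> e * norm x"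
    using has_second_derivative_at_local_estimate[OF sd e] by blast
  let ?D = "\<lambda>x y. blinfun_apply (blinfun_apply D2 x) y"
  have "\<bar>g (p + h) - g p - blinfun_apply (Dg p) h - ?D h h / 2\<bar> \<le> e * (norm h)^2" if h: "norm h < d" for h
  proof -
    define G where "G x = g (p + x) - blinfun_apply (Dg p) x - ?D x x / 2" for x
    define G' where "G' x = Dg (p + x) - Dg p - blinfun_apply D2 x" for x
    have der: "(G has_derivative blinfun_apply (G' x)) (at x within cball 0 (norm h))"
      if x: "x \<in> cball 0 (norm h)" for x
    proof -
      have "((\<lambda>x. ?D x x / 2) has_derivative (\<lambda>y. (?D x y + ?D y x) / 2)) (at x)"
      proof -
        have "((\<lambda>x. ?D x x) has_derivative (\<lambda>y. ?D x y + ?D y x)) (at x)"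
          by (auto intro!: derivative_eq_intros)
        from has_derivative_divide'[OF this has_derivative_const, of 2] show ?thesis
          by (auto elim!: has_derivative_eq_rhs simp: fun_eq_iff field_simps)
      qed
      with g'[of x] x h have "(G has_derivative (\<lambda>y. blinfun_apply (Dg (p + x)) y
          - blinfun_apply (Dg p) y - (?D x y + ?D y x) / 2)) (at x)"
        unfolding G_def
        by (intro derivative_intros bounded_linear_imp_has_derivative blinfun.bounded_linear_right) auto
      \<comment> \<open>By symmetry of the second derivative, the derivative of the quadratic term is \<open>D2 x\<close>.\<close>
      moreover have "blinfun_apply (G' x) = (\<lambda>y. blinfun_apply (Dg (p + x)) y - blinfun_apply (Dg p) y
          - (?D x y + ?D y x) / 2)"
        by (simp add: G'_def blinfun.diff_left fun_eq_iff has_second_derivative_at_symmetric[OF sd, of _ x])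
      ultimately show ?thesis by (simp add: has_derivative_at_withinI)
    qed
    have bnd: "onorm (blinfun_apply (G' x)) \<le> e * norm h" if x: "x \<in> cball 0 (norm h)" for x
    proof -
      have "norm (G' x) \<le> e * norm x" using Dg[of x] x h by (simp add: G'_def)
      also have "\<dots> \<le> e * norm h" using x e by (simp add: mult_left_mono)
      finally show ?thesis by (simp add: norm_blinfun.rep_eq)
    qed
    have "norm (G h - G 0) \<le> e * norm h * norm (h - 0)"
      by (rule differentiable_bound[OF convex_cball der bnd]) auto
    thus ?thesis unfolding G_def by (simp add: power2_eq_square mult.assoc)
  qed
  thus ?thesis using \<open>d > 0\<close> by blast
qed

section \<open>Quadratic forms and the Schur complement\<close>

lemma linear_eq_sum_axis:
  fixes L :: "real^'n \<Rightarrow> real"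
  assumes "linear L"
  shows "L x = (\<Sum>i\<in>UNIV. x$i * L (axis i 1))"
proof -
  have "L x = L (\<Sum>i\<in>UNIV. x$i *\<^sub>R axis i 1)"
    using basis_expansion[of x] by (simp add: scalar_mult_eq_scaleR)
  also have "\<dots> = (\<Sum>i\<in>UNIV. x$i * L (axis i 1))"
    using assms by (simp add: linear_sum linear_scale o_def)
  finally show ?thesis .
qed

lemma bilinear_eq_inner_matrix:
  fixes B :: "real^'n \<Rightarrow> real^'k \<Rightarrow> real"
  assumes "\<And>y. linear (\<lambda>x. B x y)" and "\<And>x. linear (B x)"
  shows "B x y = x \<bullet> ((\<chi> i j. B (axis i 1) (axis j 1)) *v y)"
proof -
  have "B x y = (\<Sum>i\<in>UNIV. x$i * B (axis i 1) y)"
    using linear_eq_sum_axis[OF assms(1)] .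
  also have "\<dots> = (\<Sum>i\<in>UNIV. x$i * (\<Sum>j\<in>UNIV. y$j * B (axis i 1) (axis j 1)))"
    using linear_eq_sum_axis[OF assms(2), of "axis _ 1" y] by presburger
  also have "\<dots> = x \<bullet> ((\<chi> i j. B (axis i 1) (axis j 1)) *v y)"
    by (simp add: inner_vec_def matrix_vector_mult_def mult_ac)
  finally show ?thesis .
qed

lemma quadratic_form_hess_blocks:
  fixes D2 :: "((real^'n) \<times> (real^'m)) \<Rightarrow>\<^sub>L (((real^'n) \<times> (real^'m)) \<Rightarrow>\<^sub>L real)"
  assumes sym: "\<And>a b. blinfun_apply (blinfun_apply D2 a) b = blinfun_apply (blinfun_apply D2 b) a"
  shows "blinfun_apply (blinfun_apply D2 (u, v)) (u, v) =
     u \<bullet> (hess_xx D2 *v u) + 2 * (u \<bullet> (hess_xy D2 *v v)) + v \<bullet> (hess_yy D2 *v v)"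
proof -
  let ?D = "\<lambda>a b. blinfun_apply (blinfun_apply D2 a) b"
  have Pair_split_add: "(x, y) = (x, 0) + (0, y)" for x :: "real^'n" and y :: "real^'m" by simp
  have pair: "(x + x', 0::real^'m) = (x, 0) + (x', 0)" "(0::real^'n, y + y') = (0, y) + (0, y')"
    "(c *\<^sub>R x, 0::real^'m) = c *\<^sub>R (x, 0)" "(0::real^'n, c *\<^sub>R y) = c *\<^sub>R (0, y)"
    for x x' :: "real^'n" and y y' :: "real^'m" and c :: real by simp_all
  have lin: "linear (\<lambda>x. ?D (x, 0) z)" "linear (\<lambda>x. ?D z (x, 0))"
    "linear (\<lambda>y. ?D (0, y) z)" "linear (\<lambda>y. ?D z (0, y))" for z
    by (rule linearI; simp only: pair blinfun.bilinear_simps)+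
  have "?D (u, 0) (u, 0) = u \<bullet> (hess_xx D2 *v u)"
    unfolding hess_xx_def by (rule bilinear_eq_inner_matrix[where B="\<lambda>x y. ?D (x, 0) (y, 0)"]) (fact lin)+
  moreover have "?D (u, 0) (0, v) = u \<bullet> (hess_xy D2 *v v)"
    unfolding hess_xy_def by (rule bilinear_eq_inner_matrix[where B="\<lambda>x y. ?D (x, 0) (0, y)"]) (fact lin)+
  moreover have "?D (0, v) (0, v) = v \<bullet> (hess_yy D2 *v v)"
    unfolding hess_yy_def by (rule bilinear_eq_inner_matrix[where B="\<lambda>x y. ?D (0, x) (0, y)"]) (fact lin)+
  moreover have "?D (u, v) (u, v) = ?D (u, 0) (u, 0) + ?D (u, 0) (0, v) + ?D (0, v) (u, 0) + ?D (0, v) (0, v)"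
    by (subst Pair_split_add[of u v])+ (simp only: blinfun.bilinear_simps add_ac)
  ultimately show ?thesis using sym[of "(0, v)" "(u, 0)"] by simp
qed

lemma transpose_hess_yy:
  assumes "\<And>a b. blinfun_apply (blinfun_apply D2 a) b = blinfun_apply (blinfun_apply D2 b) a"
  shows "transpose (hess_yy D2) = hess_yy D2"
  unfolding hess_yy_def transpose_def using assms by (simp add: vec_eq_iff)

lemma quadratic_form_completed_square:
  fixes H :: "real^'m^'m" and M :: "real^'m^'n" and A :: "real^'n^'n"
  assumes symH: "transpose H = H" and inv: "H ** W = mat 1"
  shows "u \<bullet> (A *v u) + 2 * (u \<bullet> (M *v v)) + v \<bullet> (H *v v) =
     u \<bullet> ((A - M ** W ** transpose M) *v u)
     + (v + W *v (transpose M *v u)) \<bullet> (H *v (v + W *v (transpose M *v u)))"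
proof -
  define z where "z = transpose M *v u"
  have uM: "u \<bullet> (M *v x) = z \<bullet> x" for x
    unfolding z_def by (metis dot_lmul_matrix transpose_matrix_vector)
  have H_sym: "x \<bullet> (H *v y) = y \<bullet> (H *v x)" for x y
    by (metis dot_lmul_matrix inner_commute symH transpose_matrix_vector)
  have "H *v (W *v z) = z"
    by (simp add: matrix_vector_mul_assoc inv)
  hence "(v + W *v z) \<bullet> (H *v (v + W *v z)) = v \<bullet> (H *v v) + 2 * (z \<bullet> v) + z \<bullet> (W *v z)"
    using H_sym[of v "W *v z"]
    by (simp add: matrix_vector_right_distrib inner_add_left inner_add_right inner_commute)
  moreover have "(A - M ** W ** transpose M) *v u = A *v u - M *v (W *v z)"
    unfolding z_def
    by (simp add: matrix_vector_mult_diff_rdistrib matrix_vector_mul_assoc[symmetric]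
        del: transpose_matrix_vector)
  ultimately show ?thesis
    unfolding z_def[symmetric] using uM[of v] uM[of "W *v z"] by (simp add: inner_diff_right)
qed

lemma pos_def_coercive:
  fixes A :: "real^'k^'k"
  assumes "pos_def A"
  obtains c where "c > 0" "\<And>v. c * (norm v)^2 \<le> v \<bullet> (A *v v)"
proof -
  let ?q = "\<lambda>v. v \<bullet> (A *v v)"
  have "axis undefined 1 \<in> sphere (0::real^'k) 1" by (simp add: norm_axis_1)
  hence "sphere (0::real^'k) 1 \<noteq> {}" by blast
  moreover have "continuous_on (sphere 0 1) ?q"
    by (intro continuous_intros linear_continuous_on matrix_vector_mul_bounded_linear)
  ultimately obtain w where w: "w \<in> sphere 0 1" and w_min: "\<And>y. y \<in> sphere 0 1 \<Longrightarrow> ?q w \<le> ?q y"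
    using continuous_attains_inf[OF compact_sphere] by blast
  have "?q w * (norm v)^2 \<le> ?q v" for v
  proof (cases "v = 0")
    case False
    define y where "y = (1 / norm v) *\<^sub>R v"
    have "v = norm v *\<^sub>R y" using False by (simp add: y_def)
    hence "?q v = (norm v)^2 * ?q y"
      by (metis (no_types) inner_scaleR_left matrix_vector_mult_scaleR mult.assoc power2_eq_square
          scaleR_conv_of_real inner_scaleR_right of_real_def)
    moreover have "?q w \<le> ?q y" using False by (intro w_min) (simp add: y_def)
    ultimately show ?thesis by (metis mult.commute mult_right_mono zero_le_power2)
  qed simp
  moreover have "w \<noteq> 0" using w by auto
  hence "?q w > 0" using assms unfolding pos_def_def by blast
  ultimately show ?thesis using that by blast
qed

lemma neg_def_coercive:
  fixes A :: "real^'k^'k"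
  assumes "neg_def A"
  obtains c where "c > 0" "\<And>v. v \<bullet> (A *v v) \<le> - c * (norm v)^2"
proof -
  have neg: "(- A) *v v = - (A *v v)" for v
    by (simp add: matrix_vector_mult_def vec_eq_iff sum_negf)
  have "pos_def (- A)" using assms unfolding pos_def_def neg_def_def neg by simp
  then obtain c where c: "c > 0" "\<And>v. c * (norm v)^2 \<le> v \<bullet> ((- A) *v v)"
    using pos_def_coercive by blast
  show ?thesis
  proof (rule that[OF c(1)])
    show "v \<bullet> (A *v v) \<le> - c * (norm v)^2" for v using c(2)[of v] unfolding neg by simp
  qed
qed

lemma neg_def_right_inverse:
  fixes A :: "real^'k^'k"
  assumes "neg_def A"
  shows "A ** matrix_inv A = mat 1"
proof -
  have "\<forall>x. A *v x = 0 \<longrightarrow> x = 0" using assms unfolding neg_def_def by force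
  hence "invertible A" using matrix_left_invertible_ker invertible_left_inverse by blast
  thus ?thesis unfolding invertible_def matrix_inv_def by (metis (mono_tags, lifting) someI_ex)
qed

text \<open>The maximiser in \<open>v\<close> of the second-order model \<open>D2 (u, v) (u, v)\<close>: it solves
  \<open>hess_yy D2 *v v = - (transpose (hess_xy D2) *v u)\<close>.\<close>
definition hess_response ::
  "(((real^'n) \<times> (real^'m)) \<Rightarrow>\<^sub>L (((real^'n) \<times> (real^'m)) \<Rightarrow>\<^sub>L real)) \<Rightarrow> real^'n \<Rightarrow> real^'m" where
  "hess_response D2 u = - (matrix_inv (hess_yy D2) *v (transpose (hess_xy D2) *v u))"

lemma hessian_completed_square:
  assumes sym: "\<And>a b. blinfun_apply (blinfun_apply D2 a) b = blinfun_apply (blinfun_apply D2 b) a"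
    and nd: "neg_def (hess_yy D2)"
  shows "blinfun_apply (blinfun_apply D2 (u, v)) (u, v) = u \<bullet> (schur_hess D2 *v u)
     + (v - hess_response D2 u) \<bullet> (hess_yy D2 *v (v - hess_response D2 u))"
  unfolding quadratic_form_hess_blocks[OF sym] schur_hess_def hess_response_def diff_minus_eq_add
  by (rule quadratic_form_completed_square[OF transpose_hess_yy[OF sym] neg_def_right_inverse[OF nd]])

lemma hess_response_bound:
  obtains K where "K > 0" "\<And>u. norm (hess_response D2 u) \<le> K * norm u"
proof -
  have "bounded_linear (hess_response D2)"
    unfolding hess_response_def
    by (intro bounded_linear_minus bounded_linear_compose[OF matrix_vector_mul_bounded_linear]
        matrix_vector_mul_bounded_linear)
  with bounded_linear.pos_bounded that show ?thesis by (metis mult.commute)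
qed

section \<open>Local minimax points\<close>

lemma calm_local_minimax_imp_local_minimax:
  "calm_local_minimax f xb yb \<Longrightarrow> local_minimax f xb yb"
  unfolding calm_local_minimax_def local_minimax_def by blast

lemma minimax_with_partial_derivative_zero:
  fixes f :: "'x::metric_space \<Rightarrow> 'y::real_normed_vector \<Rightarrow> real"
  assumes mm: "minimax_with f xb yb \<delta>0 \<tau>" and "\<delta>0 > 0" and der: "(f xb has_derivative D) (at yb)"
  shows "D = (\<lambda>v. 0)"
proof (rule differential_zero_maxmin[OF _ open_ball der])
  show "yb \<in> ball yb \<delta>0" using \<open>\<delta>0 > 0\<close> by simp
  have "f xb y \<le> f xb yb" if "y \<in> ball yb \<delta>0" for y
  proof -
    have "\<delta>0 \<in> {0<..\<delta>0}" "xb \<in> cball xb \<delta>0" "y \<in> cball yb \<delta>0"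
      using that \<open>\<delta>0 > 0\<close> by auto
    thus ?thesis using mm unfolding minimax_with_def by blast
  qed
  thus "(\<forall>y\<in>ball yb \<delta>0. f xb y \<le> f xb yb) \<or> (\<forall>y\<in>ball yb \<delta>0. f xb yb \<le> f xb y)" by blast
qed

lemma minimax_with_witness_near:
  fixes f :: "'x::real_normed_vector \<Rightarrow> 'y::real_normed_vector \<Rightarrow> real"
  assumes mm: "minimax_with f xb yb \<delta>0 \<tau>" and "\<delta>0 > 0" and "radius_function \<tau>" and "r > 0"
  shows "\<exists>T>0. \<forall>t. 0 < t \<and> t < T \<longrightarrow> (\<exists>w. norm w < r \<and> f xb yb \<le> f (xb + t *\<^sub>R u) (yb + w))"
proof -
  have "\<forall>\<^sub>F s in at_right 0. dist (\<tau> s) 0 < r"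
    using assms unfolding radius_function_def by (intro tendstoD) auto
  then obtain \<eta> where "\<eta> > 0" and \<eta>: "\<And>s. 0 < s \<Longrightarrow> s < \<eta> \<Longrightarrow> \<bar>\<tau> s\<bar> < r"
    unfolding eventually_at_right_field by auto
  define T where "T = min \<delta>0 \<eta> / (norm u + 1)"
  have "norm u + 1 > 0" by (simp add: add_nonneg_pos)
  hence "T > 0" using \<open>\<delta>0 > 0\<close> \<open>\<eta> > 0\<close> by (simp add: T_def)
  moreover have "\<exists>w. norm w < r \<and> f xb yb \<le> f (xb + t *\<^sub>R u) (yb + w)" if t: "0 < t" "t < T" for t
  proof -
    define \<delta> where "\<delta> = t * (norm u + 1)"
    have \<delta>: "0 < \<delta>" "\<delta> < \<delta>0" "\<delta> < \<eta>"
      using t by (auto simp: \<delta>_def T_def field_simps add_pos_nonneg)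
    have "\<delta> \<in> {0<..\<delta>0}" "xb + t *\<^sub>R u \<in> cball xb \<delta>" "yb \<in> cball yb \<delta>"
      using t \<delta> by (auto simp: \<delta>_def dist_norm)
    then obtain y' where y': "y' \<in> cball yb (\<tau> \<delta>)" and "f xb yb \<le> f (xb + t *\<^sub>R u) y'"
      using mm unfolding minimax_with_def by blast
    moreover have "norm (y' - yb) < r"
      using y' \<eta>[OF \<delta>(1,3)] by (simp add: dist_norm norm_minus_commute abs_less_iff)
    ultimately show ?thesis by (intro exI[of _ "y' - yb"]) simp
  qed
  ultimately show ?thesis by blast
qed

section \<open>Second-order conditions\<close>

lemma nonneg_if_nonneg_near_0:
  fixes A B T :: real
  assumes T: "T > 0" and nonneg: "\<And>t. 0 < t \<Longrightarrow> t < T \<Longrightarrow> 0 \<le> t * A + t^2 * B"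
  shows "A \<ge> 0"
proof (rule ccontr)
  assume "\<not> A \<ge> 0"
  hence A: "A < 0" by simp
  define t where "t = min (T / 2) (- A / (2 * (\<bar>B\<bar> + 1)))"
  have t: "0 < t" "t < T" using T A by (auto simp: t_def field_simps)
  have "t * \<bar>B\<bar> \<le> (- A / (2 * (\<bar>B\<bar> + 1))) * \<bar>B\<bar>"
    by (rule mult_right_mono) (auto simp: t_def)
  also have "\<dots> \<le> - A / 2"
    using A by (auto simp: field_simps)
  finally have "t * B \<le> - A / 2" by (smt (verit) mult_left_mono t(1) abs_ge_self)
  hence "t * (A + t * B) < 0" using A t by (simp add: mult_pos_neg)
  moreover have "t * (A + t * B) = t * A + t^2 * B" by (simp add: algebra_simps power2_eq_square)
  ultimately show False using nonneg[OF t] by linarith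
qed

lemma norm_add_power2_le:
  fixes a b :: "'a::real_normed_vector"
  shows "(norm (a + b))^2 \<le> 2 * (norm a)^2 + 2 * (norm b)^2"
proof -
  have "(norm (a + b))^2 \<le> (norm a + norm b)^2"
    by (simp add: norm_triangle_ineq power_mono)
  also have "\<dots> \<le> 2 * (norm a)^2 + 2 * (norm b)^2"
    using sum_squares_bound[of "norm a" "norm b"] by (simp add: power2_sum)
  finally show ?thesis .
qed

context
  fixes f :: "real^'n \<Rightarrow> real^'m \<Rightarrow> real" and xb :: "real^'n" and yb :: "real^'m"
    and Dg :: "((real^'n) \<times> (real^'m)) \<Rightarrow> (((real^'n) \<times> (real^'m)) \<Rightarrow>\<^sub>L real)"
    and D2 :: "((real^'n) \<times> (real^'m)) \<Rightarrow>\<^sub>L (((real^'n) \<times> (real^'m)) \<Rightarrow>\<^sub>L real)"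
  assumes twice: "has_second_derivative_at (\<lambda>z. f (fst z) (snd z)) Dg D2 (xb, yb)"
begin

lemma taylor_expansion_pair:
  assumes "e > 0"
  shows "\<exists>d>0. \<forall>u v. norm (u, v) < d \<longrightarrow>
     \<bar>f (xb + u) (yb + v) - f xb yb - blinfun_apply (Dg (xb, yb)) (u, v)
       - blinfun_apply (blinfun_apply D2 (u, v)) (u, v) / 2\<bar> \<le> e * ((norm u)^2 + (norm v)^2)"
proof -
  obtain d where "d > 0" and d: "\<And>h. norm h < d \<Longrightarrow>
     \<bar>f (fst ((xb, yb) + h)) (snd ((xb, yb) + h)) - f xb yb - blinfun_apply (Dg (xb, yb)) h
       - blinfun_apply (blinfun_apply D2 h) h / 2\<bar> \<le> e * (norm h)^2"
    using has_second_derivative_at_taylor[OF twice assms] by auto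
  have "(norm (u, v))^2 = (norm u)^2 + (norm v)^2" for u :: "real^'n" and v :: "real^'m"
    by (simp add: norm_Pair)
  thus ?thesis using \<open>d > 0\<close> d[of "(u, v)" for u v] by (intro exI[of _ d]) simp
qed

lemma second_order_upper_bound:
  assumes nd: "neg_def (hess_yy D2)" and e: "e > 0"
  shows "\<exists>d>0. \<forall>u w. norm (u, w) < d \<longrightarrow> f (xb + u) (yb + w) - f xb yb
     \<le> blinfun_apply (Dg (xb, yb)) (u, w) + u \<bullet> (schur_hess D2 *v u) / 2 + e * (norm u)^2"
proof -
  obtain K where "K > 0" and K: "\<And>u. norm (hess_response D2 u) \<le> K * norm u"
    using hess_response_bound by blast
  obtain cH where "cH > 0" and cH: "\<And>v. v \<bullet> (hess_yy D2 *v v) \<le> - cH * (norm v)^2"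
    using neg_def_coercive[OF nd] by blast
  define e' where "e' = min (cH / 4) (e / (1 + 2 * K^2))"
  have K2: "1 + 2 * K^2 > 0" by (simp add: add_pos_nonneg)
  have e'_pos: "e' > 0" using e \<open>cH > 0\<close> K2 by (simp add: e'_def)
  have e'_cH: "e' \<le> cH / 4" unfolding e'_def by (rule min.cobounded1)
  have "e' \<le> e / (1 + 2 * K^2)" unfolding e'_def by (rule min.cobounded2)
  hence e'K: "e' * (1 + 2 * K^2) \<le> e" using K2 by (simp add: pos_le_divide_eq)
  obtain d where "d > 0" and d: "\<And>u v. norm (u, v) < d \<Longrightarrow>
     \<bar>f (xb + u) (yb + v) - f xb yb - blinfun_apply (Dg (xb, yb)) (u, v)
       - blinfun_apply (blinfun_apply D2 (u, v)) (u, v) / 2\<bar> \<le> e' * ((norm u)^2 + (norm v)^2)"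
    using taylor_expansion_pair[OF e'_pos] by blast
  have "f (xb + u) (yb + w) - f xb yb
     \<le> blinfun_apply (Dg (xb, yb)) (u, w) + u \<bullet> (schur_hess D2 *v u) / 2 + e * (norm u)^2"
    if uw: "norm (u, w) < d" for u w
  proof -
    define z where "z = w - hess_response D2 u"
    have Q: "blinfun_apply (blinfun_apply D2 (u, w)) (u, w) \<le> u \<bullet> (schur_hess D2 *v u) - cH * (norm z)^2"
      using hessian_completed_square[OF has_second_derivative_at_symmetric[OF twice] nd] cH[of z]
      by (simp add: z_def)
    have "(norm w)^2 \<le> 2 * (norm z)^2 + 2 * K^2 * (norm u)^2"
    proof -
      have "(norm (hess_response D2 u))^2 \<le> (K * norm u)^2" by (simp add: K power_mono)
      with norm_add_power2_le[of z "hess_response D2 u"] show ?thesis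
        by (simp add: z_def power_mult_distrib)
    qed
    \<comment> \<open>\<open>e' \<le> cH / 4\<close> lets the negative term \<open>- cH |z|^2 / 2\<close> absorb the error in \<open>w\<close>.\<close>
    hence "e' * ((norm u)^2 + (norm w)^2) \<le> e' * (2 * (norm z)^2 + (1 + 2 * K^2) * (norm u)^2)"
      using e'_pos by (intro mult_left_mono) (auto simp: algebra_simps)
    also have "\<dots> = 2 * e' * (norm z)^2 + e' * (1 + 2 * K^2) * (norm u)^2"
      by (simp add: algebra_simps)
    also have "\<dots> \<le> cH / 2 * (norm z)^2 + e * (norm u)^2"
      using e'_cH e'K by (intro add_mono mult_right_mono) auto
    finally have "e' * ((norm u)^2 + (norm w)^2) \<le> cH / 2 * (norm z)^2 + e * (norm u)^2" .
    with Q show ?thesis using d[OF uw] by (simp add: abs_le_iff)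
  qed
  thus ?thesis using \<open>d > 0\<close> by blast
qed

lemma second_order_lower_bound_response:
  assumes nd: "neg_def (hess_yy D2)" and e: "e > 0"
  shows "\<exists>d>0. \<forall>u. norm u < d \<longrightarrow>
     blinfun_apply (Dg (xb, yb)) (u, hess_response D2 u) + u \<bullet> (schur_hess D2 *v u) / 2 - e * (norm u)^2
     \<le> f (xb + u) (yb + hess_response D2 u) - f xb yb"
proof -
  obtain K where "K > 0" and K: "\<And>u. norm (hess_response D2 u) \<le> K * norm u"
    using hess_response_bound by blast
  have K2: "1 + K^2 > 0" by (simp add: add_pos_nonneg)
  obtain d where "d > 0" and d: "\<And>u v. norm (u, v) < d \<Longrightarrow>
     \<bar>f (xb + u) (yb + v) - f xb yb - blinfun_apply (Dg (xb, yb)) (u, v)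
       - blinfun_apply (blinfun_apply D2 (u, v)) (u, v) / 2\<bar> \<le> e / (1 + K^2) * ((norm u)^2 + (norm v)^2)"
    using taylor_expansion_pair[of "e / (1 + K^2)"] e K2 by auto
  have "blinfun_apply (Dg (xb, yb)) (u, hess_response D2 u) + u \<bullet> (schur_hess D2 *v u) / 2 - e * (norm u)^2
     \<le> f (xb + u) (yb + hess_response D2 u) - f xb yb"
    if u: "norm u < d / (1 + K)" for u
  proof -
    have "norm (u, hess_response D2 u) \<le> (1 + K) * norm u"
      using norm_Pair_le[of u "hess_response D2 u"] K[of u] by (simp add: algebra_simps)
    also have "\<dots> < d" using u \<open>K > 0\<close> by (simp add: field_simps)
    finally have uv: "norm (u, hess_response D2 u) < d" .
    have "(norm (hess_response D2 u))^2 \<le> K^2 * (norm u)^2"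
      using K[of u] by (metis norm_ge_zero power_mono power_mult_distrib)
    hence "e / (1 + K^2) * ((norm u)^2 + (norm (hess_response D2 u))^2) \<le> e / (1 + K^2) * ((1 + K^2) * (norm u)^2)"
      using e K2 by (intro mult_left_mono) (auto simp: algebra_simps)
    also have "\<dots> = e * (norm u)^2" using K2 by simp
    finally show ?thesis
      using d[OF uv] hessian_completed_square[OF has_second_derivative_at_symmetric[OF twice] nd, of u]
      by (simp add: abs_le_iff)
  qed
  moreover have "d / (1 + K) > 0" using \<open>d > 0\<close> \<open>K > 0\<close> by simp
  ultimately show ?thesis by blast
qed

lemma calm_local_minimax_if_second_order_sufficient:
  assumes grad: "\<And>u v. blinfun_apply (Dg (xb, yb)) (u, v) = 0"
    and nd: "neg_def (hess_yy D2)" and pd: "pos_def (schur_hess D2)"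
  shows "calm_local_minimax f xb yb"
proof -
  obtain K where "K > 0" and K: "\<And>u. norm (hess_response D2 u) \<le> K * norm u"
    using hess_response_bound by blast
  obtain cS where "cS > 0" and cS: "\<And>u. cS * (norm u)^2 \<le> u \<bullet> (schur_hess D2 *v u)"
    using pos_def_coercive[OF pd] by blast
  obtain d1 where "d1 > 0" and d1: "\<And>u w. norm (u, w) < d1 \<Longrightarrow> f (xb + u) (yb + w) - f xb yb
     \<le> blinfun_apply (Dg (xb, yb)) (u, w) + u \<bullet> (schur_hess D2 *v u) / 2 + 1 * (norm u)^2"
    using second_order_upper_bound[OF nd zero_less_one] by blast
  obtain d2 where "d2 > 0" and d2: "\<And>u. norm u < d2 \<Longrightarrow>
     blinfun_apply (Dg (xb, yb)) (u, hess_response D2 u) + u \<bullet> (schur_hess D2 *v u) / 2 - cS / 2 * (norm u)^2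
     \<le> f (xb + u) (yb + hess_response D2 u) - f xb yb"
    using second_order_lower_bound_response[OF nd, of "cS / 2"] \<open>cS > 0\<close> by auto
  define \<delta>0 where "\<delta>0 = min d1 d2 / 2"
  have "\<delta>0 > 0" using \<open>d1 > 0\<close> \<open>d2 > 0\<close> by (simp add: \<delta>0_def)
  have "minimax_with f xb yb \<delta>0 (\<lambda>\<delta>. K * \<delta>)"
    unfolding minimax_with_def
  proof (intro ballI conjI)
    fix \<delta> x y assume \<delta>: "\<delta> \<in> {0<..\<delta>0}" and x: "x \<in> cball xb \<delta>" and y: "y \<in> cball yb \<delta>"
    have "norm (0::real^'n, y - yb) < d1"
      using y \<delta> by (simp add: \<delta>0_def dist_norm norm_minus_commute norm_Pair)
    thus "f xb y \<le> f xb yb" using d1[of 0 "y - yb"] grad by simp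
    define u where "u = x - xb"
    have "norm u < d2" using x \<delta> by (simp add: u_def \<delta>0_def dist_norm norm_minus_commute)
    hence "f xb yb \<le> f x (yb + hess_response D2 u)"
      using d2[of u] grad cS[of u] by (simp add: u_def)
    moreover have "yb + hess_response D2 u \<in> cball yb (K * \<delta>)"
    proof -
      have "norm u \<le> \<delta>" using x by (simp add: u_def dist_norm norm_minus_commute)
      hence "K * norm u \<le> K * \<delta>" using \<open>K > 0\<close> by simp
      thus ?thesis using K[of u] by (simp add: dist_norm)
    qed
    ultimately show "\<exists>y'\<in>cball yb (K * \<delta>). f xb yb \<le> f x y'" by blast
  qed
  moreover have "radius_function (\<lambda>\<delta>. K * \<delta>)"
    unfolding radius_function_def using \<open>K > 0\<close> by (auto intro!: tendsto_eq_intros)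
  moreover have "calm_at_0 (\<lambda>\<delta>. K * \<delta>)"
    unfolding calm_at_0_def using \<open>K > 0\<close> by (intro exI[of _ K] conjI exI[of _ 1]) auto
  ultimately show ?thesis unfolding calm_local_minimax_def using \<open>\<delta>0 > 0\<close> by blast
qed

lemma minimax_with_partial_y_zero:
  assumes "minimax_with f xb yb \<delta>0 \<tau>" and "\<delta>0 > 0"
  shows "blinfun_apply (Dg (xb, yb)) (0, v) = 0"
proof -
  have "((\<lambda>z. f (fst z) (snd z)) has_derivative blinfun_apply (Dg (xb, yb))) (at (xb, yb))"
    using twice eventually_nhds_x_imp_x unfolding has_second_derivative_at_def by blast
  moreover have "((\<lambda>y. (xb, y)) has_derivative (\<lambda>v. (0, v))) (at yb)"
    by (auto intro!: derivative_eq_intros)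
  ultimately have "(f xb has_derivative (\<lambda>v. blinfun_apply (Dg (xb, yb)) (0, v))) (at yb)"
    using diff_chain_at by (fastforce simp: o_def)
  from minimax_with_partial_derivative_zero[OF assms this] show ?thesis by metis
qed

lemma minimax_with_second_order_bound:
  assumes mm: "minimax_with f xb yb \<delta>0 \<tau>" and "\<delta>0 > 0" and "radius_function \<tau>"
    and nd: "neg_def (hess_yy D2)" and "e > 0"
  shows "\<exists>T>0. \<forall>t. 0 < t \<and> t < T \<longrightarrow> 0 \<le> t * blinfun_apply (Dg (xb, yb)) (u, 0)
     + t^2 * (u \<bullet> (schur_hess D2 *v u) / 2 + e * (norm u)^2)"
proof -
  obtain d where "d > 0" and d: "\<And>u w. norm (u, w) < d \<Longrightarrow> f (xb + u) (yb + w) - f xb yb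
     \<le> blinfun_apply (Dg (xb, yb)) (u, w) + u \<bullet> (schur_hess D2 *v u) / 2 + e * (norm u)^2"
    using second_order_upper_bound[OF nd \<open>e > 0\<close>] by blast
  obtain T where "T > 0" and T: "\<And>t. 0 < t \<Longrightarrow> t < T \<Longrightarrow>
      \<exists>w. norm w < d / 2 \<and> f xb yb \<le> f (xb + t *\<^sub>R u) (yb + w)"
    using minimax_with_witness_near[OF assms(1-3), of "d / 2" u] \<open>d > 0\<close> by auto
  have u1: "norm u + 1 > 0" by (simp add: add_nonneg_pos)
  define T' where "T' = min T (d / (2 * (norm u + 1)))"
  have "0 \<le> t * blinfun_apply (Dg (xb, yb)) (u, 0) + t^2 * (u \<bullet> (schur_hess D2 *v u) / 2 + e * (norm u)^2)"
    if t: "0 < t" "t < T'" for t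
  proof -
    obtain w where w: "norm w < d / 2" and le: "f xb yb \<le> f (xb + t *\<^sub>R u) (yb + w)"
      using T t by (auto simp: T'_def)
    have "t * norm u \<le> t * (norm u + 1)" using t by simp
    also have "\<dots> < d / 2" using t u1 by (simp add: T'_def field_simps)
    finally have "norm (t *\<^sub>R u, w) < d"
      using norm_Pair_le[of "t *\<^sub>R u" w] w t by simp
    note upper = d[OF this]
    have "blinfun_apply (Dg (xb, yb)) (t *\<^sub>R u, w)
        = blinfun_apply (Dg (xb, yb)) (t *\<^sub>R (u, 0) + (0, w))" by simp
    hence "blinfun_apply (Dg (xb, yb)) (t *\<^sub>R u, w) = t * blinfun_apply (Dg (xb, yb)) (u, 0)"
      by (simp only: blinfun.add_right blinfun.scaleR_right minimax_with_partial_y_zero[OF mm \<open>\<delta>0 > 0\<close>])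
        simp
    moreover have "(t *\<^sub>R u) \<bullet> (schur_hess D2 *v (t *\<^sub>R u)) = t^2 * (u \<bullet> (schur_hess D2 *v u))"
      by (simp add: matrix_vector_mult_scaleR power2_eq_square)
    moreover have "(norm (t *\<^sub>R u))^2 = t^2 * (norm u)^2" by (simp add: power_mult_distrib)
    ultimately have "blinfun_apply (Dg (xb, yb)) (t *\<^sub>R u, w) + (t *\<^sub>R u) \<bullet> (schur_hess D2 *v (t *\<^sub>R u)) / 2
        + e * (norm (t *\<^sub>R u))^2
      = t * blinfun_apply (Dg (xb, yb)) (u, 0) + t^2 * (u \<bullet> (schur_hess D2 *v u) / 2 + e * (norm u)^2)"
      by (simp add: algebra_simps)
    with upper le show ?thesis by linarith
  qed
  moreover have "T' > 0" using \<open>T > 0\<close> \<open>d > 0\<close> u1 by (simp add: T'_def)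
  ultimately show ?thesis by blast
qed

lemma schur_hess_pos_semidef_if_local_minimax:
  assumes "local_minimax f xb yb" and nd: "neg_def (hess_yy D2)"
  shows "pos_semidef (schur_hess D2)"
proof -
  obtain \<delta>0 \<tau> where mm: "minimax_with f xb yb \<delta>0 \<tau>" "\<delta>0 > 0" "radius_function \<tau>"
    using assms(1) unfolding local_minimax_def by blast
  let ?a = "\<lambda>u. blinfun_apply (Dg (xb, yb)) (u, 0)"
  let ?q = "\<lambda>u. u \<bullet> (schur_hess D2 *v u) / 2"
  have bound: "\<exists>T>0. \<forall>t. 0 < t \<and> t < T \<longrightarrow> 0 \<le> t * ?a u + t^2 * (?q u + e * (norm u)^2)"
    if "e > 0" for u e
    using minimax_with_second_order_bound[OF mm nd that] .
  have a_nonneg: "?a u \<ge> 0" for u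
    using bound[OF zero_less_one, of u] nonneg_if_nonneg_near_0 by blast
  have a_zero: "?a u = 0" for u
  proof -
    have "(- u, 0::real^'m) = - (u, 0)" by simp
    hence "?a (- u) = - ?a u" by (metis blinfun.minus_right)
    thus ?thesis using a_nonneg[of u] a_nonneg[of "- u"] by linarith
  qed
  have q_perturbed: "?q u + e * (norm u)^2 \<ge> 0" if e: "e > 0" for u e
  proof -
    obtain T where "T > 0" and "\<forall>t. 0 < t \<and> t < T \<longrightarrow> 0 \<le> t * ?a u + t^2 * (?q u + e * (norm u)^2)"
      using bound[OF e] by blast
    hence "0 \<le> (T / 2)^2 * (?q u + e * (norm u)^2)" using a_zero[of u] by simp
    thus ?thesis using \<open>T > 0\<close> by (simp add: zero_le_mult_iff)
  qed
  have "?q u \<ge> 0" for u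
  proof (rule nonneg_if_nonneg_near_0[OF zero_less_one])
    fix t :: real assume "0 < t"
    hence "0 \<le> t * (?q u + t * (norm u)^2)" using q_perturbed[of t u] by simp
    thus "0 \<le> t * ?q u + t^2 * (norm u)^2" by (simp add: power2_eq_square algebra_simps)
  qed
  thus ?thesis unfolding pos_semidef_def by simp
qed

end

theorem mainTheorem16:
  fixes f :: "real^'n \<Rightarrow> real^'m \<Rightarrow> real"
    and xb :: "real^'n" and yb :: "real^'m"
    and Dg :: "((real^'n) \<times> (real^'m)) \<Rightarrow> (((real^'n) \<times> (real^'m)) \<Rightarrow>\<^sub>L real)"
    and D2 :: "((real^'n) \<times> (real^'m)) \<Rightarrow>\<^sub>L (((real^'n) \<times> (real^'m)) \<Rightarrow>\<^sub>L real)"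
  assumes standing: "\<And>x y0 \<epsilon>. \<epsilon> \<ge> 0 \<Longrightarrow> \<exists>y\<in>cball y0 \<epsilon>. \<forall>y'\<in>cball y0 \<epsilon>. f x y' \<le> f x y"
    and twice: "has_second_derivative_at (\<lambda>z. f (fst z) (snd z)) Dg D2 (xb, yb)"
  shows "((\<forall>u. blinfun_apply (Dg (xb, yb)) (u, 0) = 0) \<and> (\<forall>v. blinfun_apply (Dg (xb, yb)) (0, v) = 0) \<and>
           neg_def (hess_yy D2) \<and> pos_def (schur_hess D2)
          \<longrightarrow> calm_local_minimax f xb yb \<and> local_minimax f xb yb)
       \<and> (local_minimax f xb yb \<and> neg_def (hess_yy D2) \<longrightarrow> pos_semidef (schur_hess D2))"
proof (intro conjI impI)
  assume sufficient: "(\<forall>u. blinfun_apply (Dg (xb, yb)) (u, 0) = 0) \<and>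
    (\<forall>v. blinfun_apply (Dg (xb, yb)) (0, v) = 0) \<and> neg_def (hess_yy D2) \<and> pos_def (schur_hess D2)"
  have "blinfun_apply (Dg (xb, yb)) (u, v) = 0" for u v
  proof -
    have "(u, v) = (u, 0) + (0, v)" by simp
    thus ?thesis using sufficient by (metis blinfun.add_right add_0)
  qed
  with sufficient show "calm_local_minimax f xb yb"
    using calm_local_minimax_if_second_order_sufficient[OF twice] by blast
  thus "local_minimax f xb yb" by (rule calm_local_minimax_imp_local_minimax)
next
  assume "local_minimax f xb yb \<and> neg_def (hess_yy D2)"
  thus "pos_semidef (schur_hess D2)"
    using schur_hess_pos_semidef_if_local_minimax[OF twice] by blast
qed

end
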